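(* Let $(S,\mathcal C)$ be a connectoid and $X\subseteq S$ a countably infinite set. The following are equivalent: (i) there is an end $\omega\in\Omega(S,\mathcal C)$ such that $X$ converges to $\omega$; (ii) for every finite $Y\subseteq S$ there is an element of $\mathcal K(S\setminus Y)$ containing almost all elements of $X$; (iii) there is a necklace containing almost all elements of $X$. Moreover, if $(S,\mathcal C)$ is connected, then (i)–(iii) hold if and only if there is a necklace containing all elements of $X$.
   Context: A connectoid is given by a set $S$ and a set $\mathcal F$ of finite subsets of $S$ such that (i) $F\cup F'\in\mathcal F$ whenever $F,F'\in\mathcal F$ and $F\cap F'\neq\emptyset$, and (ii) $\emptyset\in\mathcal F$ and $\{s\}\in\mathcal F$ for every $s\in S$. A set $C\subseteq S$ is connected if for all $x,y\in C$ there is $F\in\mathcal F$ with $F\subseteq C$ and $x,y\in F$; $\mathcal C$ is the set of connected sets; $(S,\mathcal C)$ is connected if $S\in\mathcal C$. For $S'\subseteq S$, a component of $S'$ is a maximal connected subset of $S'$, and $\mathcal K(S')$ is the set of components of $S'$. "Almost all" means all but finitely many. A necklace is a connected set $N$ for which there is a family $(H_n)_{n\in\mathbb N}$ of finite connected sets with $N=\bigcup_n H_n$ and $H_i\cap H_j\neq\emptyset$ iff $|i-j|\le 1$. For a necklace $N$ and finite $Z\subseteq S$, the $Z$-tail of $N$ is the unique element of $\mathcal K(N\setminus Z)$ containing almost all elements of $N$. Two necklaces are equivalent if for every finite $Z\subseteq S$ their $Z$-tails lie in the same element of $\mathcal K(S\setminus Z)$. An end is an equivalence class of necklaces; $\Omega(S,\mathcal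 C)$ is the set of ends; $K(Z,\omega)$ is the element of $\mathcal K(S\setminus Z)$ containing the $Z$-tails of all necklaces in $\omega$. An infinite set $X\subseteq S$ converges to an end $\omega$ if $K(Y,\omega)$ contains almost all elements of $X$ for every finite $Y\subseteq S$. *)

theory Defs
  imports Main "HOL-Library.Countable_Set"
begin

definition connectoid :: "'a set \<Rightarrow> 'a set set \<Rightarrow> bool" where
  "connectoid S F \<longleftrightarrow>
     (\<forall>A\<in>F. finite A \<and> A \<subseteq> S) \<and>
     (\<forall>A\<in>F. \<forall>B\<in>F. A \<inter> B \<noteq> {} \<longrightarrow> A \<union> B \<in> F) \<and>
     {} \<in> F \<and> (\<forall>s\<in>S. {s} \<in> F)"

definition connected_set :: "'a set set \<Rightarrow> 'a set \<Rightarrow> bool" where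
  "connected_set F C \<longleftrightarrow> (\<forall>x\<in>C. \<forall>y\<in>C. \<exists>A\<in>F. A \<subseteq> C \<and> x \<in> A \<and> y \<in> A)"

definition components :: "'a set set \<Rightarrow> 'a set \<Rightarrow> 'a set set" where
  "components F S' = {C. C \<subseteq> S' \<and> connected_set F C \<and>
      (\<forall>D. C \<subseteq> D \<and> D \<subseteq> S' \<and> connected_set F D \<longrightarrow> D = C)}"

definition necklace :: "'a set set \<Rightarrow> 'a set \<Rightarrow> bool" where
  "necklace F N \<longleftrightarrow> connected_set F N \<and>
     (\<exists>H :: nat \<Rightarrow> 'a set. N = (\<Union>n. H n) \<and>
        (\<forall>n. finite (H n) \<and> connected_set F (H n)) \<and>
        (\<forall>i j. H i \<inter> H j \<noteq> {} \<longleftrightarrow> i \<le> j + 1 \<and> j \<le> i + 1))"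

definition tail :: "'a set set \<Rightarrow> 'a set \<Rightarrow> 'a set \<Rightarrow> 'a set" where
  "tail F N Z = (THE T. T \<in> components F (N - Z) \<and> finite (N - T))"

definition necklace_equiv :: "'a set \<Rightarrow> 'a set set \<Rightarrow> 'a set \<Rightarrow> 'a set \<Rightarrow> bool" where
  "necklace_equiv S F N N' \<longleftrightarrow>
     (\<forall>Z. finite Z \<and> Z \<subseteq> S \<longrightarrow>
        (\<exists>K\<in>components F (S - Z). tail F N Z \<subseteq> K \<and> tail F N' Z \<subseteq> K))"

definition ends :: "'a set \<Rightarrow> 'a set set \<Rightarrow> 'a set set set" where
  "ends S F = {{N'. necklace F N' \<and> N' \<subseteq> S \<and> necklace_equiv S F N N'} | N.
                 necklace F N \<and> N \<subseteq> S}"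

definition end_comp :: "'a set \<Rightarrow> 'a set set \<Rightarrow> 'a set \<Rightarrow> 'a set set \<Rightarrow> 'a set" where
  "end_comp S F Z \<omega> = (THE K. K \<in> components F (S - Z) \<and> (\<forall>N\<in>\<omega>. tail F N Z \<subseteq> K))"

definition converges_to :: "'a set \<Rightarrow> 'a set set \<Rightarrow> 'a set \<Rightarrow> 'a set set \<Rightarrow> bool" where
  "converges_to S F X \<omega> \<longleftrightarrow> infinite X \<and>
     (\<forall>Y. finite Y \<and> Y \<subseteq> S \<longrightarrow> finite (X - end_comp S F Y \<omega>))"

end

(*
  (iii) gives (i) with the end of the necklace N: each Z-tail of N lies in K(Z, omega), and N
  already contains almost all of X. (i) gives (ii) directly from the definition of convergence.

  For (ii) => (iii) let D(Y) be the component of S - Y containing almost all of X, and enumerate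
  X as x_0, x_1, .... Starting from a point of D({}), choose members H_0, H_1, ... of F such that,
  with Y_n = H_0 u ... u H_(n-1), the set H_(n+1) lies in D(Y_n), meets H_n and D(Y_(n+1)), and
  contains x_n if x_n is in D(Y_n) as well as the finitely many points of X in
  D(Y_n) - D(Y_(n+1)). Such a set exists because a connected set contains a member of F through
  any finitely many of its points. As H_(n+1) avoids Y_n, only consecutive H_n meet, so their
  union is a necklace. It contains every point x_k of X in D({}): either x_k is still in D(Y_k),
  hence in H_(k+1), or it leaves D(Y_n) at some step n < k and then lies in H_(n+1).
  If S is connected then D({}) = S, so the necklace contains all of X.
*)

theory Submission
  imports Defs
begin

section \<open>Connected sets and components\<close>

lemma connectoidD:
  assumes "connectoid S F"
  shows connectoid_finite: "A \<in> F \<Longrightarrow> finite A"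
    and connectoid_subset: "A \<in> F \<Longrightarrow> A \<subseteq> S"
    and connectoid_Un: "A \<in> F \<Longrightarrow> B \<in> F \<Longrightarrow> A \<inter> B \<noteq> {} \<Longrightarrow> A \<union> B \<in> F"
    and connectoid_empty: "{} \<in> F"
    and connectoid_singleton: "s \<in> S \<Longrightarrow> {s} \<in> F"
  using assms unfolding connectoid_def by blast+

lemma connected_setD:
  "connected_set F C \<Longrightarrow> x \<in> C \<Longrightarrow> y \<in> C \<Longrightarrow> \<exists>A\<in>F. A \<subseteq> C \<and> x \<in> A \<and> y \<in> A"
  unfolding connected_set_def by blast

lemma connected_set_if_in_F: "A \<in> F \<Longrightarrow> connected_set F A"
  unfolding connected_set_def by blast

lemma connected_set_Union:
  assumes cS: "connectoid S F"
    and conn: "\<And>D. D \<in> DD \<Longrightarrow> connected_set F D" and common: "\<And>D. D \<in> DD \<Longrightarrow> x \<in> D"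
  shows "connected_set F (\<Union>DD)"
  unfolding connected_set_def
proof (intro ballI)
  fix a b assume "a \<in> \<Union>DD" "b \<in> \<Union>DD"
  then obtain Da Db where D: "Da \<in> DD" "Db \<in> DD" "a \<in> Da" "b \<in> Db" by blast
  obtain A where A: "A \<in> F" "A \<subseteq> Da" "a \<in> A" "x \<in> A"
    using connected_setD[OF conn[OF D(1)] D(3) common[OF D(1)]] by blast
  obtain B where B: "B \<in> F" "B \<subseteq> Db" "x \<in> B" "b \<in> B"
    using connected_setD[OF conn[OF D(2)] common[OF D(2)] D(4)] by blast
  have "A \<union> B \<in> F" using connectoid_Un[OF cS A(1) B(1)] A(4) B(3) by blast
  moreover have "A \<union> B \<subseteq> \<Union>DD" using A(2) B(2) D(1,2) by blast
  ultimately show "\<exists>C\<in>F. C \<subseteq> \<Union>DD \<and> a \<in> C \<and> b \<in> C" using A(3) B(4) by blast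
qed

lemma connected_set_Un:
  assumes "connectoid S F" "connected_set F A" "connected_set F B" "A \<inter> B \<noteq> {}"
  shows "connected_set F (A \<union> B)"
proof -
  obtain x where "x \<in> A" "x \<in> B" using assms(4) by blast
  then have "connected_set F (\<Union>{A, B})"
    by (intro connected_set_Union[OF assms(1)]) (use assms(2,3) in blast)+
  then show ?thesis by simp
qed

lemma connected_set_chain_Union:
  assumes cS: "connectoid S F" and conn: "\<And>n. connected_set F (H n)"
    and meet: "\<And>n. H n \<inter> H (Suc n) \<noteq> {}"
  shows "connected_set F (\<Union>n. H n)"
proof -
  have initial: "connected_set F (\<Union>k\<le>n. H k)" for n
  proof (induction n)
    case 0
    then show ?case using conn by simp
  next
    case (Suc n)
    have "(\<Union>k\<le>n. H k) \<inter> H (Suc n) \<noteq> {}" using meet[of n] by blast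
    then show ?case using connected_set_Un[OF cS Suc conn] by (simp add: atMost_Suc Un_commute)
  qed
  obtain x where "x \<in> H 0" using meet[of 0] by blast
  then have "connected_set F (\<Union>n. \<Union>k\<le>n. H k)"
    by (intro connected_set_Union[OF cS]) (auto simp: initial)
  moreover have "(\<Union>n. \<Union>k\<le>n. H k) = (\<Union>n. H n)" by auto
  ultimately show ?thesis by simp
qed

lemma connected_set_finite_subset_in_F:
  assumes cS: "connectoid S F" and C: "connected_set F C" and "finite P" "P \<subseteq> C"
  shows "\<exists>A\<in>F. P \<subseteq> A \<and> A \<subseteq> C"
  using \<open>finite P\<close> \<open>P \<subseteq> C\<close>
proof (induction P rule: finite_induct)
  case empty
  then show ?case using connectoid_empty[OF cS] by blast
next
  case (insert p P)
  have p: "p \<in> C" and "P \<subseteq> C" using insert.prems by simp_all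
  then obtain A where A: "A \<in> F" "P \<subseteq> A" "A \<subseteq> C" using insert.IH by blast
  show ?case
  proof (cases "A = {}")
    case True
    obtain B where "B \<in> F" "B \<subseteq> C" "p \<in> B" using connected_setD[OF C p p] by blast
    then show ?thesis using A(2) True by blast
  next
    case False
    then obtain q where q: "q \<in> A" by blast
    obtain B where B: "B \<in> F" "B \<subseteq> C" "q \<in> B" "p \<in> B"
      using connected_setD[OF C _ p] q A(3) by blast
    have "A \<union> B \<in> F" using connectoid_Un[OF cS A(1) B(1)] q B(3) by blast
    moreover have "insert p P \<subseteq> A \<union> B" using A(2) B(4) by blast
    ultimately show ?thesis using A(3) B(2) by blast
  qed
qed

lemma componentsD:
  assumes "K \<in> components F S'"
  shows "K \<subseteq> S'" and "connected_set F K"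
  using assms unfolding components_def by auto

lemma components_maximal:
  "K \<in> components F S' \<Longrightarrow> K \<subseteq> D \<Longrightarrow> D \<subseteq> S' \<Longrightarrow> connected_set F D \<Longrightarrow> D = K"
  unfolding components_def by blast

lemma components_self: "connected_set F S \<Longrightarrow> S \<in> components F S"
  unfolding components_def by blast

lemma connected_set_subset_component:
  assumes cS: "connectoid S F" and C: "connected_set F C" "C \<subseteq> S'" "C \<noteq> {}"
  shows "\<exists>K\<in>components F S'. C \<subseteq> K"
proof -
  obtain x where x: "x \<in> C" using C(3) by blast
  define K where "K = \<Union>{D. D \<subseteq> S' \<and> connected_set F D \<and> x \<in> D}"
  have CK: "C \<subseteq> K" unfolding K_def using C x by blast
  have "K \<in> components F S'"
    unfolding components_def
  proof (intro CollectI conjI allI impI)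
    show "K \<subseteq> S'" unfolding K_def by blast
    show "connected_set F K" unfolding K_def by (rule connected_set_Union[OF cS]) blast+
    fix D assume D: "K \<subseteq> D \<and> D \<subseteq> S' \<and> connected_set F D"
    then have "x \<in> D" using CK x by blast
    then have "D \<subseteq> K" unfolding K_def using D by blast
    then show "D = K" using D by blast
  qed
  then show ?thesis using CK by blast
qed

lemma components_eq:
  assumes cS: "connectoid S F" and K1: "K1 \<in> components F S'" and K2: "K2 \<in> components F S'"
    and "K1 \<inter> K2 \<noteq> {}"
  shows "K1 = K2"
proof -
  have conn: "connected_set F (K1 \<union> K2)"
    using connected_set_Un[OF cS componentsD(2)[OF K1] componentsD(2)[OF K2] assms(4)] .
  have sub: "K1 \<union> K2 \<subseteq> S'" using componentsD(1)[OF K1] componentsD(1)[OF K2] by blast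
  have "K1 \<union> K2 = K1" using components_maximal[OF K1 _ sub conn] by blast
  moreover have "K1 \<union> K2 = K2" using components_maximal[OF K2 _ sub conn] by blast
  ultimately show ?thesis by blast
qed

lemma infinite_Int_cofinite:
  assumes "infinite X" "finite (X - A)" "finite (X - B)"
  shows "X \<inter> A \<inter> B \<noteq> {}"
proof
  assume "X \<inter> A \<inter> B = {}"
  then have "X \<subseteq> (X - A) \<union> (X - B)" by blast
  moreover have "finite ((X - A) \<union> (X - B))" using assms(2,3) by simp
  ultimately show False using assms(1) finite_subset by blast
qed

lemma components_eq_cofinite:
  assumes "connectoid S F" "K1 \<in> components F S'" "K2 \<in> components F S'"
    and "infinite X" "finite (X - K1)" "finite (X - K2)"
  shows "K1 = K2"
  using components_eq[OF assms(1-3)] infinite_Int_cofinite[OF assms(4-6)] by blast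

section \<open>Necklaces, tails and ends\<close>

lemma necklaceE:
  assumes "necklace F N"
  obtains H :: "nat \<Rightarrow> 'a set" where "N = (\<Union>n. H n)"
    and "\<And>n. finite (H n)" and "\<And>n. connected_set F (H n)"
    and "\<And>i j. H i \<inter> H j \<noteq> {} \<longleftrightarrow> i \<le> j + 1 \<and> j \<le> i + 1"
  using assms that unfolding necklace_def by auto

lemma chain_eventually_disjoint:
  fixes H :: "nat \<Rightarrow> 'a set"
  assumes "\<And>i j. H i \<inter> H j \<noteq> {} \<Longrightarrow> j \<le> i + 1" and "finite Z"
  shows "\<exists>m. \<forall>n\<ge>m. H n \<inter> Z = {}"
proof -
  have "finite {n. z \<in> H n}" for z
  proof (cases "\<exists>i. z \<in> H i")
    case True
    then obtain i where "z \<in> H i" by blast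
    then have "{n. z \<in> H n} \<subseteq> {..i + 1}" using assms(1)[of i] by auto
    then show ?thesis by (rule finite_subset) simp
  qed simp
  moreover have "{n. H n \<inter> Z \<noteq> {}} = (\<Union>z\<in>Z. {n. z \<in> H n})" by blast
  ultimately have "finite {n. H n \<inter> Z \<noteq> {}}" using \<open>finite Z\<close> by simp
  then obtain m where m: "\<forall>n\<in>{n. H n \<inter> Z \<noteq> {}}. n < m" using finite_nat_set_iff_bounded by blast
  have "H n \<inter> Z = {}" if "m \<le> n" for n using m that by fastforce
  then show ?thesis by blast
qed

lemma necklace_infinite:
  assumes "necklace F N"
  shows "infinite N"
proof
  assume "finite N"
  obtain H :: "nat \<Rightarrow> 'a set" where H: "N = (\<Union>n. H n)" "\<And>n. finite (H n)" "\<And>n. connected_set F (H n)"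
    "\<And>i j. H i \<inter> H j \<noteq> {} \<longleftrightarrow> i \<le> j + 1 \<and> j \<le> i + 1"
    using necklaceE[OF assms] by blast
  have "j \<le> i + 1" if "H i \<inter> H j \<noteq> {}" for i j using H(4)[of i j] that by simp
  then obtain m where "\<forall>n\<ge>m. H n \<inter> N = {}"
    using chain_eventually_disjoint[OF _ \<open>finite N\<close>] by blast
  moreover have "H m \<noteq> {}" using H(4)[of m m] by auto
  ultimately show False using H(1) by blast
qed

lemma necklace_cofinite_connected_subset:
  assumes cS: "connectoid S F" and "necklace F N" and "finite Z"
  shows "\<exists>T. connected_set F T \<and> T \<subseteq> N - Z \<and> finite (N - T)"
proof -
  obtain H :: "nat \<Rightarrow> 'a set" where H: "N = (\<Union>n. H n)" "\<And>n. finite (H n)" "\<And>n. connected_set F (H n)"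
    "\<And>i j. H i \<inter> H j \<noteq> {} \<longleftrightarrow> i \<le> j + 1 \<and> j \<le> i + 1"
    using necklaceE[OF assms(2)] by blast
  have "j \<le> i + 1" if "H i \<inter> H j \<noteq> {}" for i j using H(4)[of i j] that by simp
  then obtain m where m: "\<forall>n\<ge>m. H n \<inter> Z = {}"
    using chain_eventually_disjoint[OF _ \<open>finite Z\<close>] by blast
  define T where "T = (\<Union>n. H (n + m))"
  have conn: "\<And>n. connected_set F (H (n + m))" using H(3) .
  have meet: "\<And>n. H (n + m) \<inter> H (Suc n + m) \<noteq> {}" using H(4) by simp
  have "connected_set F T"
    unfolding T_def using connected_set_chain_Union[where H="\<lambda>n. H (n + m)", OF cS conn meet] .
  moreover have "T \<subseteq> N - Z"
  proof
    fix y assume "y \<in> T"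
    then obtain n where "y \<in> H (n + m)" unfolding T_def by blast
    moreover have "H (n + m) \<inter> Z = {}" using m by simp
    ultimately show "y \<in> N - Z" using H(1) by blast
  qed
  moreover have "N - T \<subseteq> (\<Union>n<m. H n)"
  proof
    fix y assume y: "y \<in> N - T"
    then obtain k where k: "y \<in> H k" using H(1) by blast
    have "k < m"
    proof (rule ccontr)
      assume "\<not> k < m"
      then have "y \<in> H ((k - m) + m)" using k by simp
      then show False using y unfolding T_def by blast
    qed
    then show "y \<in> (\<Union>n<m. H n)" using k by blast
  qed
  then have "finite (N - T)" by (rule finite_subset) (simp add: H(2))
  ultimately show ?thesis by blast
qed

lemma tail_component:
  assumes cS: "connectoid S F" and "necklace F N" and "finite Z"
  shows "tail F N Z \<in> components F (N - Z)" and "finite (N - tail F N Z)"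
    and "tail F N Z \<noteq> {}"
proof -
  have N: "infinite N" using necklace_infinite[OF assms(2)] .
  obtain T where T: "connected_set F T" "T \<subseteq> N - Z" "finite (N - T)"
    using necklace_cofinite_connected_subset[OF assms] by blast
  have "T \<noteq> {}" using N T(3) by auto
  then obtain K where K: "K \<in> components F (N - Z)" "T \<subseteq> K"
    using connected_set_subset_component[OF cS T(1,2)] by blast
  have fK: "finite (N - K)" using T(3) K(2) finite_subset[of "N - K" "N - T"] by blast
  have "tail F N Z = K" unfolding tail_def
    using components_eq_cofinite[OF cS _ K(1) N _ fK] K fK by (intro the_equality) blast+
  then show "tail F N Z \<in> components F (N - Z)" "finite (N - tail F N Z)" "tail F N Z \<noteq> {}"
    using K(1) fK N by auto
qed

lemma tail_subset_component:
  assumes cS: "connectoid S F" and "necklace F N" "N \<subseteq> S" "finite Z"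
  shows "\<exists>K\<in>components F (S - Z). tail F N Z \<subseteq> K"
proof -
  have "connected_set F (tail F N Z)" "tail F N Z \<subseteq> S - Z"
    using componentsD[OF tail_component(1)[OF cS assms(2,4)]] assms(3) by auto
  then show ?thesis
    using connected_set_subset_component[OF cS] tail_component(3)[OF cS assms(2,4)] by blast
qed

definition end_of :: "'a set \<Rightarrow> 'a set set \<Rightarrow> 'a set \<Rightarrow> 'a set set" where
  "end_of S F N = {N'. necklace F N' \<and> N' \<subseteq> S \<and> necklace_equiv S F N N'}"

lemma mem_ends_iff: "\<omega> \<in> ends S F \<longleftrightarrow> (\<exists>N. necklace F N \<and> N \<subseteq> S \<and> \<omega> = end_of S F N)"
  unfolding ends_def end_of_def by blast

lemma mem_end_of_self:
  assumes "connectoid S F" "necklace F N" "N \<subseteq> S"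
  shows "N \<in> end_of S F N"
  using tail_subset_component[OF assms] assms(2,3)
  unfolding end_of_def necklace_equiv_def by blast

lemma end_comp_end_of:
  assumes cS: "connectoid S F" and N: "necklace F N" "N \<subseteq> S" and Y: "finite Y" "Y \<subseteq> S"
    and K: "K \<in> components F (S - Y)" "tail F N Y \<subseteq> K"
  shows "end_comp S F Y (end_of S F N) = K"
  unfolding end_comp_def
proof (rule the_equality)
  have tail_ne: "tail F N Y \<noteq> {}" using tail_component(3)[OF cS N(1) Y(1)] .
  show "K \<in> components F (S - Y) \<and> (\<forall>N'\<in>end_of S F N. tail F N' Y \<subseteq> K)"
  proof (intro conjI ballI)
    fix N' assume "N' \<in> end_of S F N"
    then obtain K' where K': "K' \<in> components F (S - Y)" "tail F N Y \<subseteq> K'" "tail F N' Y \<subseteq> K'"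
      unfolding end_of_def necklace_equiv_def using Y by blast
    have "K' = K" using components_eq[OF cS K'(1) K(1)] K'(2) K(2) tail_ne by blast
    then show "tail F N' Y \<subseteq> K" using K'(3) by blast
  qed (rule K(1))
  fix K' assume K': "K' \<in> components F (S - Y) \<and> (\<forall>N'\<in>end_of S F N. tail F N' Y \<subseteq> K')"
  then have "tail F N Y \<subseteq> K'" using mem_end_of_self[OF cS N] by blast
  then show "K' = K" using components_eq[OF cS _ K(1)] K' K(2) tail_ne by blast
qed

lemma end_comp_in_components:
  assumes cS: "connectoid S F" and "\<omega> \<in> ends S F" "finite Y" "Y \<subseteq> S"
  shows "end_comp S F Y \<omega> \<in> components F (S - Y)"
proof -
  obtain N where N: "necklace F N" "N \<subseteq> S" "\<omega> = end_of S F N"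
    using assms(2) unfolding mem_ends_iff by blast
  then show ?thesis
    using tail_subset_component[OF cS N(1,2) assms(3)] end_comp_end_of[OF cS N(1,2) assms(3,4)] by auto
qed

lemma converges_to_end_of:
  assumes cS: "connectoid S F" and N: "necklace F N" "N \<subseteq> S"
    and "infinite X" "finite (X - N)"
  shows "converges_to S F X (end_of S F N)"
  unfolding converges_to_def
proof (intro conjI allI impI)
  fix Y assume Y: "finite Y \<and> Y \<subseteq> S"
  obtain K where K: "K \<in> components F (S - Y)" "tail F N Y \<subseteq> K"
    using tail_subset_component[OF cS N] Y by blast
  have "X - K \<subseteq> (X - N) \<union> (N - tail F N Y)" using K(2) by blast
  then have "finite (X - K)"
    using assms(5) tail_component(2)[OF cS N(1)] Y finite_subset by blast
  then show "finite (X - end_comp S F Y (end_of S F N))"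
    using end_comp_end_of[OF cS N _ _ K] Y by simp
qed (rule assms(4))

lemma converges_to_end_if_necklace:
  assumes "connectoid S F" "necklace F N" "N \<subseteq> S" "infinite X" "finite (X - N)"
  shows "\<exists>\<omega>\<in>ends S F. converges_to S F X \<omega>"
proof -
  have "end_of S F N \<in> ends S F" unfolding mem_ends_iff using assms(2,3) by blast
  then show ?thesis using converges_to_end_of[OF assms] by blast
qed

lemma converges_to_cofinite_component:
  assumes "connectoid S F" "\<omega> \<in> ends S F" "converges_to S F X \<omega>" "finite Y" "Y \<subseteq> S"
  shows "\<exists>C\<in>components F (S - Y). finite (X - C)"
  using end_comp_in_components[OF assms(1,2,4,5)] assms(3-5) unfolding converges_to_def by blast

section \<open>A necklace through a cofinite component\<close>

lemma chain_meets_iff: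
  fixes H :: "nat \<Rightarrow> 'a set"
  assumes meet: "\<And>n. H n \<inter> H (Suc n) \<noteq> {}"
    and disjoint: "\<And>k n. k < n \<Longrightarrow> H k \<inter> H (Suc n) = {}"
  shows "H i \<inter> H j \<noteq> {} \<longleftrightarrow> i \<le> j + 1 \<and> j \<le> i + 1"
proof -
  have ordered: "H i \<inter> H j \<noteq> {} \<longleftrightarrow> j \<le> i + 1" if "i \<le> j" for i j
  proof -
    consider "j = i" | "j = Suc i" | m where "j = Suc m" "i < m"
      using \<open>i \<le> j\<close> by (metis le_neq_implies_less lessE)
    then show ?thesis
    proof cases
      case 1
      then show ?thesis using meet[of i] by auto
    next
      case 2
      then show ?thesis using meet[of i] by simp
    next
      case 3
      then show ?thesis using disjoint[of i m] by simp
    qed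
  qed
  show ?thesis using ordered[of i j] ordered[of j i] by (cases "i \<le> j") (auto simp: Int_commute)
qed

lemma necklace_chain_Union:
  assumes cS: "connectoid S F" and H: "\<And>n. H n \<in> F"
    and meet: "\<And>n. H n \<inter> H (Suc n) \<noteq> {}"
    and disjoint: "\<And>k n. k < n \<Longrightarrow> H k \<inter> H (Suc n) = {}"
  shows "necklace F (\<Union>n. H n)"
  unfolding necklace_def
proof (intro conjI exI[of _ H] allI refl)
  show "connected_set F (\<Union>n. H n)"
    using connected_set_chain_Union[where H=H, OF cS connected_set_if_in_F[OF H] meet] .
  show "finite (H n)" "connected_set F (H n)" for n
    using connectoid_finite[OF cS H] connected_set_if_in_F[OF H] by simp_all
  show "H i \<inter> H j \<noteq> {} \<longleftrightarrow> i \<le> j + 1 \<and> j \<le> i + 1" for i j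
    using chain_meets_iff[where H=H, OF meet disjoint] .
qed

lemma cofinite_component_step:
  assumes cS: "connectoid S F" and "infinite X"
    and D: "\<And>Y. finite Y \<Longrightarrow> Y \<subseteq> S \<Longrightarrow> D Y \<in> components F (S - Y) \<and> finite (X - D Y)"
    and Y: "finite Y" "Y \<subseteq> S" and H: "H \<in> F" "H \<inter> D Y \<noteq> {}"
  shows "\<exists>H'. H' \<in> F \<and> H' \<subseteq> D Y \<and> H \<inter> H' \<noteq> {} \<and> H' \<inter> D (Y \<union> H) \<noteq> {}
           \<and> X \<inter> D Y - D (Y \<union> H) \<subseteq> H' \<and> (p \<in> D Y \<longrightarrow> p \<in> H')"
proof -
  obtain q where q: "q \<in> H" "q \<in> D Y" using H(2) by blast
  have YH: "finite (Y \<union> H)" "Y \<union> H \<subseteq> S"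
    using Y connectoid_finite[OF cS H(1)] connectoid_subset[OF cS H(1)] by auto
  have DY: "D Y \<in> components F (S - Y)" "finite (X - D Y)" using D[OF Y] by auto
  have DYH: "finite (X - D (Y \<union> H))" using D[OF YH] by auto
  obtain r where r: "r \<in> D Y" "r \<in> D (Y \<union> H)"
    using infinite_Int_cofinite[OF \<open>infinite X\<close> DY(2) DYH] by blast
  define P where "P = {q, r} \<union> (X \<inter> D Y - D (Y \<union> H)) \<union> ({p} \<inter> D Y)"
  have "finite (X \<inter> D Y - D (Y \<union> H))" using DYH by (rule finite_subset[rotated]) blast
  then have "finite P" unfolding P_def by simp
  moreover have "P \<subseteq> D Y" unfolding P_def using q r by blast
  ultimately obtain A where A: "A \<in> F" "P \<subseteq> A" "A \<subseteq> D Y"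
    using connected_set_finite_subset_in_F[OF cS componentsD(2)[OF DY(1)]] by blast
  have "H \<inter> A \<noteq> {}" "A \<inter> D (Y \<union> H) \<noteq> {}" "X \<inter> D Y - D (Y \<union> H) \<subseteq> A"
    "p \<in> D Y \<longrightarrow> p \<in> A"
    using A(2) q r unfolding P_def by auto
  then show ?thesis using A(1,3) by blast
qed

lemma cofinite_component_chain:
  assumes cS: "connectoid S F" and "infinite X"
    and D: "\<And>Y. finite Y \<Longrightarrow> Y \<subseteq> S \<Longrightarrow> D Y \<in> components F (S - Y) \<and> finite (X - D Y)"
    and r: "r \<in> D {}"
  obtains H :: "nat \<Rightarrow> 'a set" where "\<And>n. H n \<in> F" and "\<And>n. H n \<inter> H (Suc n) \<noteq> {}"
    and "\<And>n. H (Suc n) \<subseteq> D (\<Union>k<n. H k)"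
    and "\<And>n. X \<inter> D (\<Union>k<n. H k) - D (\<Union>k<Suc n. H k) \<subseteq> H (Suc n)"
    and "\<And>n. x n \<in> D (\<Union>k<n. H k) \<Longrightarrow> x n \<in> H (Suc n)"
proof -
  have rS: "r \<in> S" using componentsD(1)[OF conjunct1[OF D[of "{}"]]] r by auto
  define good where "good Y H n H' \<longleftrightarrow> H' \<in> F \<and> H' \<subseteq> D Y \<and> H \<inter> H' \<noteq> {}
      \<and> H' \<inter> D (Y \<union> H) \<noteq> {} \<and> X \<inter> D Y - D (Y \<union> H) \<subseteq> H' \<and> (x n \<in> D Y \<longrightarrow> x n \<in> H')"
    for Y H n H'
  define step where "step Y H n = (SOME H'. good Y H n H')" for Y H n
  have step: "good Y H n (step Y H n)"
    if "finite Y" "Y \<subseteq> S" "H \<in> F" "H \<inter> D Y \<noteq> {}" for Y H n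
    unfolding step_def good_def
    by (rule someI_ex, rule cofinite_component_step[OF cS \<open>infinite X\<close> D that])
  define seq where "seq = rec_nat ({}, {r}) (\<lambda>n p. (fst p \<union> snd p, step (fst p) (snd p) n))"
  define Y where "Y n = fst (seq n)" for n
  define H where "H n = snd (seq n)" for n
  have Y_0: "Y 0 = {}" and H_0: "H 0 = {r}"
    and Y_Suc: "Y (Suc n) = Y n \<union> H n" and H_Suc: "H (Suc n) = step (Y n) (H n) n" for n
    unfolding Y_def H_def seq_def by simp_all
  have Y_eq: "Y n = (\<Union>k<n. H k)" for n
    by (induction n) (simp_all add: Y_0 Y_Suc lessThan_Suc Un_commute)
  have inv: "finite (Y n) \<and> Y n \<subseteq> S \<and> H n \<in> F \<and> H n \<inter> D (Y n) \<noteq> {}" for n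
  proof (induction n)
    case 0
    show ?case using Y_0 H_0 r connectoid_singleton[OF cS rS] by simp
  next
    case (Suc n)
    then have "finite (Y (Suc n))" "Y (Suc n) \<subseteq> S"
      using Y_Suc connectoid_finite[OF cS] connectoid_subset[OF cS] by auto
    then show ?case using step[of "Y n" "H n" n] Suc Y_Suc H_Suc unfolding good_def by simp
  qed
  have "H (Suc n) \<subseteq> D (Y n) \<and> H n \<inter> H (Suc n) \<noteq> {} \<and> X \<inter> D (Y n) - D (Y (Suc n)) \<subseteq> H (Suc n)
      \<and> (x n \<in> D (Y n) \<longrightarrow> x n \<in> H (Suc n))" for n
    using step[of "Y n" "H n" n] inv[of n] Y_Suc H_Suc unfolding good_def by simp
  then show thesis
    using that[of H] inv unfolding Y_eq by blast
qed

lemma chain_captures_enumeration: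
  fixes D H :: "nat \<Rightarrow> 'a set" and x :: "nat \<Rightarrow> 'a"
  assumes leave: "\<And>n. X \<inter> D n - D (Suc n) \<subseteq> H (Suc n)"
    and stay: "\<And>n. x n \<in> D n \<Longrightarrow> x n \<in> H (Suc n)" and "X \<subseteq> range x"
  shows "X \<inter> D 0 \<subseteq> (\<Union>n. H n)"
proof
  fix y assume y: "y \<in> X \<inter> D 0"
  then obtain k where k: "y = x k" using \<open>X \<subseteq> range x\<close> by blast
  show "y \<in> (\<Union>n. H n)"
  proof (cases "y \<in> D k")
    case True
    then show ?thesis using stay[of k] k by blast
  next
    case False
    then obtain n where "y \<in> D n" "y \<notin> D (Suc n)"
      using ex_least_nat_less[of "\<lambda>n. y \<notin> D n" k] y by auto
    then show ?thesis using leave[of n] y by blast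
  qed
qed

lemma necklace_covering_cofinite_component:
  assumes cS: "connectoid S F" and "countable X" "infinite X"
    and cofinite: "\<And>Y. finite Y \<Longrightarrow> Y \<subseteq> S \<Longrightarrow> \<exists>C\<in>components F (S - Y). finite (X - C)"
    and C: "C \<in> components F S" "finite (X - C)"
  shows "\<exists>N. necklace F N \<and> N \<subseteq> S \<and> X \<inter> C \<subseteq> N"
proof -
  define D where "D Y = (SOME C. C \<in> components F (S - Y) \<and> finite (X - C))" for Y
  have D: "D Y \<in> components F (S - Y) \<and> finite (X - D Y)" if "finite Y" "Y \<subseteq> S" for Y
  proof -
    have "\<exists>C. C \<in> components F (S - Y) \<and> finite (X - C)" using cofinite[OF that] by blast
    then show ?thesis unfolding D_def by (rule someI_ex)
  qed
  have "D {} \<in> components F S" "finite (X - D {})" using D[of "{}"] by simp_all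
  then have D_empty: "D {} = C"
    using components_eq_cofinite[OF cS _ C(1) \<open>infinite X\<close> _ C(2)] by blast
  obtain r where r: "r \<in> D {}" using infinite_Int_cofinite[OF \<open>infinite X\<close> C(2) C(2)] D_empty by blast
  define x where "x = from_nat_into X"
  obtain H :: "nat \<Rightarrow> 'a set" where H: "\<And>n. H n \<in> F" "\<And>n. H n \<inter> H (Suc n) \<noteq> {}"
    "\<And>n. H (Suc n) \<subseteq> D (\<Union>k<n. H k)"
    "\<And>n. X \<inter> D (\<Union>k<n. H k) - D (\<Union>k<Suc n. H k) \<subseteq> H (Suc n)"
    "\<And>n. x n \<in> D (\<Union>k<n. H k) \<Longrightarrow> x n \<in> H (Suc n)"
    by (rule cofinite_component_chain[where x=x, OF cS \<open>infinite X\<close> D r]) auto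
  have "necklace F (\<Union>n. H n)"
  proof (rule necklace_chain_Union[where H=H, OF cS H(1) H(2)])
    fix k n :: nat assume "k < n"
    have "finite (\<Union>k<n. H k)" "(\<Union>k<n. H k) \<subseteq> S"
      using connectoid_finite[OF cS H(1)] connectoid_subset[OF cS H(1)] by auto
    then have "H (Suc n) \<subseteq> S - (\<Union>k<n. H k)"
      using H(3)[of n] componentsD(1)[OF conjunct1[OF D]] by blast
    then show "H k \<inter> H (Suc n) = {}" using \<open>k < n\<close> by blast
  qed
  moreover have "(\<Union>n. H n) \<subseteq> S" using connectoid_subset[OF cS H(1)] by blast
  moreover have "X \<inter> C \<subseteq> (\<Union>n. H n)"
    using chain_captures_enumeration[where D="\<lambda>n. D (\<Union>k<n. H k)", OF H(4) H(5)]
      subset_range_from_nat_into[OF \<open>countable X\<close>] D_empty unfolding x_def by simp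
  ultimately show ?thesis by blast
qed

lemma necklace_cofinite_if_cofinite_components:
  assumes cS: "connectoid S F" and "countable X" "infinite X"
    and cofinite: "\<And>Y. finite Y \<Longrightarrow> Y \<subseteq> S \<Longrightarrow> \<exists>C\<in>components F (S - Y). finite (X - C)"
  shows "\<exists>N. necklace F N \<and> N \<subseteq> S \<and> finite (X - N)"
proof -
  obtain C where C: "C \<in> components F S" "finite (X - C)" using cofinite[of "{}"] by auto
  then obtain N where N: "necklace F N" "N \<subseteq> S" "X \<inter> C \<subseteq> N"
    using necklace_covering_cofinite_component[OF cS assms(2,3) cofinite] by blast
  have "finite (X - N)" using C(2) by (rule finite_subset[rotated]) (use N(3) in blast)
  then show ?thesis using N(1,2) by blast
qed

lemma necklace_containing_if_connected:
  assumes cS: "connectoid S F" and "connected_set F S" "X \<subseteq> S" "countable X" "infinite X"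
    and cofinite: "\<And>Y. finite Y \<Longrightarrow> Y \<subseteq> S \<Longrightarrow> \<exists>C\<in>components F (S - Y). finite (X - C)"
  shows "\<exists>N. necklace F N \<and> N \<subseteq> S \<and> X \<subseteq> N"
proof -
  have "finite (X - S)" using \<open>X \<subseteq> S\<close> by (simp add: Diff_eq_empty_iff[THEN iffD2])
  from necklace_covering_cofinite_component[OF cS assms(4,5) cofinite components_self[OF assms(2)] this]
  show ?thesis using \<open>X \<subseteq> S\<close> by (simp add: inf.absorb1)
qed

theorem proposition2p2:
  fixes S :: "'a set" and F :: "'a set set" and X :: "'a set"
  assumes "connectoid S F" and "X \<subseteq> S" and "countable X" and "infinite X"
  shows "((\<exists>\<omega>\<in>ends S F. converges_to S F X \<omega>) \<longleftrightarrow>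
            (\<forall>Y. finite Y \<and> Y \<subseteq> S \<longrightarrow> (\<exists>C\<in>components F (S - Y). finite (X - C))))
       \<and> ((\<forall>Y. finite Y \<and> Y \<subseteq> S \<longrightarrow> (\<exists>C\<in>components F (S - Y). finite (X - C))) \<longleftrightarrow>
            (\<exists>N. necklace F N \<and> N \<subseteq> S \<and> finite (X - N)))
       \<and> (connected_set F S \<longrightarrow>
            ((\<exists>\<omega>\<in>ends S F. converges_to S F X \<omega>) \<longleftrightarrow>
             (\<exists>N. necklace F N \<and> N \<subseteq> S \<and> X \<subseteq> N)))"
proof -
  note cS = assms(1)
  let ?i = "\<exists>\<omega>\<in>ends S F. converges_to S F X \<omega>"
  let ?ii = "\<forall>Y. finite Y \<and> Y \<subseteq> S \<longrightarrow> (\<exists>C\<in>components F (S - Y). finite (X - C))"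
  let ?iii = "\<exists>N. necklace F N \<and> N \<subseteq> S \<and> finite (X - N)"
  have i_ii: ?ii if ?i
    using that converges_to_cofinite_component[OF cS] by blast
  have ii_iii: ?iii if ?ii
    using necklace_cofinite_if_cofinite_components[OF cS assms(3,4)] that by blast
  have iii_i: ?i if ?iii
    using that converges_to_end_if_necklace[OF cS _ _ assms(4)] by blast
  have i_covers_X: "\<exists>N. necklace F N \<and> N \<subseteq> S \<and> X \<subseteq> N" if "connected_set F S" ?i
    using necklace_containing_if_connected[OF cS that(1) assms(2-4)] i_ii[OF that(2)] by blast
  have covers_X_i: ?i if "necklace F N" "N \<subseteq> S" "X \<subseteq> N" for N
  proof -
    have "finite (X - N)" using that(3) by (simp add: Diff_eq_empty_iff[THEN iffD2])
    then show ?thesis using iii_i that(1,2) by blast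
  qed
  show ?thesis using i_ii ii_iii iii_i i_covers_X covers_X_i by blast
qed

end
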